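(* For every integer $s\geq 3$, the graph $\operatorname{KG}(2s+2,2)_{s-\operatorname{stab}}$ is a core.
   Context: For integers $s,k\geq 2$ and $n\geq ks$, a subset $S\subseteq[n]=\{1,\dots,n\}$ is $s$-stable if $s\leq |i-j|\leq n-s$ for all distinct $i,j\in S$. The $s$-stable Kneser graph $\operatorname{KG}(n,k)_{s-\operatorname{stab}}$ has as vertices the $s$-stable $k$-subsets of $[n]$, two vertices being adjacent iff they are disjoint. A finite graph $G$ is a core if every homomorphism (edge-preserving map) $G\to G$ is an automorphism of $G$, equivalently $G$ has no proper retract. *)

theory Defs
  imports Main
begin

definition ndist :: "nat \<Rightarrow> nat \<Rightarrow> nat" where
  "ndist i j = (if i \<le> j then j - i else i - j)"

definition s_stable :: "nat \<Rightarrow> nat \<Rightarrow> nat set \<Rightarrow> bool" where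
  "s_stable n s S \<longleftrightarrow> S \<subseteq> {1..n} \<and>
     (\<forall>i\<in>S. \<forall>j\<in>S. i \<noteq> j \<longrightarrow> s \<le> ndist i j \<and> ndist i j \<le> n - s)"

definition stable_kneser_vertices :: "nat \<Rightarrow> nat \<Rightarrow> nat \<Rightarrow> nat set set" where
  "stable_kneser_vertices n k s = {S. s_stable n s S \<and> card S = k}"

definition kneser_adj :: "nat set \<Rightarrow> nat set \<Rightarrow> bool" where
  "kneser_adj A B \<longleftrightarrow> A \<inter> B = {}"

definition graph_hom :: "'a set \<Rightarrow> ('a \<Rightarrow> 'a \<Rightarrow> bool) \<Rightarrow> 'b set \<Rightarrow> ('b \<Rightarrow> 'b \<Rightarrow> bool) \<Rightarrow> ('a \<Rightarrow> 'b) \<Rightarrow> bool" where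
  "graph_hom V E W F f \<longleftrightarrow> f ` V \<subseteq> W \<and> (\<forall>x\<in>V. \<forall>y\<in>V. E x y \<longrightarrow> F (f x) (f y))"

definition graph_aut :: "'a set \<Rightarrow> ('a \<Rightarrow> 'a \<Rightarrow> bool) \<Rightarrow> ('a \<Rightarrow> 'a) \<Rightarrow> bool" where
  "graph_aut V E f \<longleftrightarrow> bij_betw f V V \<and> (\<forall>x\<in>V. \<forall>y\<in>V. E (f x) (f y) \<longleftrightarrow> E x y)"

definition is_core :: "'a set \<Rightarrow> ('a \<Rightarrow> 'a \<Rightarrow> bool) \<Rightarrow> bool" where
  "is_core V E \<longleftrightarrow> (\<forall>f. graph_hom V E V E f \<longrightarrow> graph_aut V E f)"

end

theory Submission
  imports Defs
begin

text \<open>The vertices are the pairs of points of the cycle \<open>{1..2s+2}\<close> at cyclic distance \<open>s\<close> or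
  \<open>s+1\<close>; every point lies in exactly three of them, and for \<open>s \<ge> 3\<close> no three points are pairwise
  at such distance, so every intersecting family of vertices lies in the star of a point.
  For an endomorphism \<open>f\<close>, the vertices \<open>x\<close> with \<open>q \<in> f x\<close> form an intersecting family, hence
  lie in the star of some point \<open>\<phi> q\<close>, and double counting incidences forces equality.
  Then every vertex has exactly two \<open>\<phi>\<close>-preimages, which makes the fibres of \<open>\<phi>\<close> equally large
  along the cycle, hence singletons; so \<open>\<phi>\<close> is a permutation with \<open>\<phi> ` f x = x\<close>, and \<open>f\<close> is an
  automorphism.\<close>

definition star :: "'a set set \<Rightarrow> 'a \<Rightarrow> 'a set set" where
  "star V p = {x \<in> V. p \<in> x}"

lemma finite_star: "finite V \<Longrightarrow> finite (star V p)"
  by (simp add: star_def)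

lemma sum_card_star:
  assumes "finite P" "finite V" "\<forall>x\<in>V. x \<subseteq> P \<and> card x = k"
  shows "(\<Sum>p\<in>P. card (star V p)) = k * card V"
  unfolding star_def
proof (rule sum_multicount[OF assms(1,2)])
  show "\<forall>x\<in>V. card {p \<in> P. p \<in> x} = k"
    using assms(3) by (simp add: Collect_conj_eq Int_absorb1)
qed

lemma disjointness_endo_preimage_star:
  assumes P: "finite P" and V: "finite V" "\<forall>x\<in>V. x \<subseteq> P \<and> card x = k"
    and star_card: "\<forall>p\<in>P. card (star V p) = d"
    and common_point: "\<And>F. F \<subseteq> V \<Longrightarrow> F \<noteq> {} \<Longrightarrow> \<forall>x\<in>F. \<forall>y\<in>F. x \<inter> y \<noteq> {} \<Longrightarrow>
      \<exists>p\<in>P. F \<subseteq> star V p"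
    and f: "f ` V \<subseteq> V" "\<forall>x\<in>V. \<forall>y\<in>V. x \<inter> y = {} \<longrightarrow> f x \<inter> f y = {}"
  obtains \<phi> where "\<forall>q\<in>P. \<phi> q \<in> P \<and> {x \<in> V. q \<in> f x} = star V (\<phi> q)"
proof -
  define A where "A q = {x \<in> V. q \<in> f x}" for q
  have A_in_star: "\<exists>p\<in>P. A q \<subseteq> star V p" if "q \<in> P" for q
  proof (cases "A q = {}")
    case False
    have "\<forall>x\<in>A q. \<forall>y\<in>A q. x \<inter> y \<noteq> {}"
      using f(2) by (auto simp: A_def)
    with common_point[of "A q"] False show ?thesis
      by (auto simp: A_def)
  qed (use that in blast)
  have "(\<Sum>q\<in>P. card (A q)) = k * card V"
    unfolding A_def
  proof (rule sum_multicount[OF P V(1)])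
    show "\<forall>x\<in>V. card {q \<in> P. q \<in> f x} = k"
    proof
      fix x assume "x \<in> V"
      with f(1) V(2) have "f x \<subseteq> P" "card (f x) = k"
        by auto
      then show "card {q \<in> P. q \<in> f x} = k"
        by (simp add: Collect_conj_eq Int_absorb1)
    qed
  qed
  also have "\<dots> = (\<Sum>p\<in>P. d)"
    using sum_card_star[OF P V] star_card by simp
  finally have sum_eq: "(\<Sum>q\<in>P. card (A q)) = (\<Sum>p\<in>P. d)" .
  have card_A_le: "card (A q) \<le> d" if "q \<in> P" for q
    using A_in_star[OF that] star_card card_mono[OF finite_star[OF V(1)]] by metis
  have "\<exists>p\<in>P. A q = star V p" if q: "q \<in> P" for q
  proof -
    obtain p where p: "p \<in> P" "A q \<subseteq> star V p"
      using A_in_star[OF q] by blast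
    have "card (A q) = card (star V p)"
      using sum_mono_inv[OF sum_eq card_A_le q P] star_card p(1) by simp
    with p show ?thesis
      using card_subset_eq[OF finite_star[OF V(1)]] by blast
  qed
  then obtain \<phi> where "\<forall>q\<in>P. \<phi> q \<in> P \<and> A q = star V (\<phi> q)"
    by metis
  with that show ?thesis
    unfolding A_def by blast
qed

lemma point_map_vimage_vertex:
  assumes V: "\<forall>x\<in>V. x \<subseteq> P" and f: "f ` V \<subseteq> V"
    and \<phi>: "\<forall>q\<in>P. \<phi> q \<in> P \<and> {x \<in> V. q \<in> f x} = star V (\<phi> q)"
    and x: "x \<in> V"
  shows "{q \<in> P. \<phi> q \<in> x} = f x"
proof -
  have "q \<in> f x \<longleftrightarrow> \<phi> q \<in> x" if q: "q \<in> P" for q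
  proof -
    have "x \<in> {x \<in> V. q \<in> f x} \<longleftrightarrow> x \<in> star V (\<phi> q)"
      using \<phi> q by simp
    then show ?thesis
      using x by (simp add: star_def)
  qed
  moreover have "f x \<subseteq> P"
    using V f x by blast
  ultimately show ?thesis
    by blast
qed

lemma kneser_aut_of_injective_point_map:
  assumes P: "finite P" and V: "finite V" "\<forall>x\<in>V. x \<subseteq> P \<and> card x = k"
    and f: "f ` V \<subseteq> V" "\<forall>x\<in>V. \<forall>y\<in>V. x \<inter> y = {} \<longrightarrow> f x \<inter> f y = {}"
    and \<phi>: "\<forall>q\<in>P. \<phi> q \<in> P \<and> {x \<in> V. q \<in> f x} = star V (\<phi> q)" "inj_on \<phi> P"
  shows "graph_aut V kneser_adj f"
proof -
  have \<phi>_image: "\<phi> ` f x = x" if x: "x \<in> V" for x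
  proof -
    have fx: "f x \<subseteq> P" "card (f x) = k"
      using f(1) V(2) x by auto
    have "\<phi> ` f x \<subseteq> x"
      using point_map_vimage_vertex[OF _ f(1) \<phi>(1) x] V(2) by blast
    moreover have "card (\<phi> ` f x) = card x"
      using card_image[OF inj_on_subset[OF \<phi>(2) fx(1)]] fx V(2) x by simp
    ultimately show ?thesis
      using card_subset_eq finite_subset P V(2) x by metis
  qed
  then have inj: "inj_on f V"
    by (metis inj_onI)
  then have "f ` V = V"
    using card_subset_eq[OF V(1) f(1)] card_image by metis
  moreover have "f x \<inter> f y = {} \<longleftrightarrow> x \<inter> y = {}" if "x \<in> V" "y \<in> V" for x y
  proof
    assume "f x \<inter> f y = {}"
    moreover have "f x \<subseteq> P" "f y \<subseteq> P"
      using f(1) V(2) that by auto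
    ultimately have "\<phi> ` f x \<inter> \<phi> ` f y = {}"
      using inj_on_image_Int[OF \<phi>(2)] by (metis image_empty)
    then show "x \<inter> y = {}"
      using \<phi>_image that by simp
  qed (use f(2) that in blast)
  ultimately show ?thesis
    using inj by (simp add: graph_aut_def bij_betw_def kneser_adj_def)
qed

lemma doubleton_in_stable_kneser_iff:
  assumes "s > 0"
  shows "{a, b} \<in> stable_kneser_vertices n 2 s \<longleftrightarrow>
    a \<in> {1..n} \<and> b \<in> {1..n} \<and> s \<le> ndist a b \<and> ndist a b \<le> n - s"
proof
  assume "{a, b} \<in> stable_kneser_vertices n 2 s"
  then have "a \<noteq> b" "s_stable n s {a, b}"
    by (auto simp: stable_kneser_vertices_def card_insert_if split: if_splits)
  then show "a \<in> {1..n} \<and> b \<in> {1..n} \<and> s \<le> ndist a b \<and> ndist a b \<le> n - s"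
    by (simp add: s_stable_def)
next
  assume ab: "a \<in> {1..n} \<and> b \<in> {1..n} \<and> s \<le> ndist a b \<and> ndist a b \<le> n - s"
  with assms have "a \<noteq> b"
    by (auto simp: ndist_def)
  with ab show "{a, b} \<in> stable_kneser_vertices n 2 s"
    by (auto simp: stable_kneser_vertices_def s_stable_def ndist_def)
qed

lemma stable_kneser_vertex_doubleton:
  "x \<in> stable_kneser_vertices n 2 s \<Longrightarrow> \<exists>a b. x = {a, b}"
  by (auto simp: stable_kneser_vertices_def card_2_iff)

lemma stable_kneser_vertex_subset:
  "x \<in> stable_kneser_vertices n 2 s \<Longrightarrow> x \<subseteq> {1..n} \<and> card x = 2"
  by (simp add: stable_kneser_vertices_def s_stable_def)

lemma finite_stable_kneser_vertices: "finite (stable_kneser_vertices n 2 s)"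
proof -
  have "stable_kneser_vertices n 2 s \<subseteq> Pow {1..n}"
    using stable_kneser_vertex_subset by blast
  then show ?thesis
    by (rule finite_subset) simp
qed

definition cyc_shift :: "nat \<Rightarrow> nat \<Rightarrow> nat \<Rightarrow> nat" where
  "cyc_shift n k p = (if p + k \<le> n then p + k else p + k - n)"

lemma cyc_shift_in_range: "p \<in> {1..n} \<Longrightarrow> k \<le> n \<Longrightarrow> cyc_shift n k p \<in> {1..n}"
  by (auto simp: cyc_shift_def)

lemma ndist_cyc_shift:
  "p \<in> {1..n} \<Longrightarrow> k \<le> n \<Longrightarrow> ndist p (cyc_shift n k p) = (if p + k \<le> n then k else n - k)"
  by (auto simp: cyc_shift_def ndist_def)

lemma eq_cyc_shift:
  "p \<in> {1..n} \<Longrightarrow> q \<in> {1..n} \<Longrightarrow> q = cyc_shift n (if p \<le> q then q - p else n - (p - q)) p"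
  by (auto simp: cyc_shift_def)

lemma cyc_shift_in_stable_kneser:
  assumes "s > 0" "p \<in> {1..2*s+2}" "k \<in> {s, s+1, s+2}"
  shows "{p, cyc_shift (2*s+2) k p} \<in> stable_kneser_vertices (2*s+2) 2 s"
  using assms cyc_shift_in_range[of p "2*s+2" k] ndist_cyc_shift[of p "2*s+2" k]
  by (auto simp: doubleton_in_stable_kneser_iff)

lemma stable_kneser_star_eq:
  assumes s: "s > 0" and p: "p \<in> {1..2*s+2}"
  shows "star (stable_kneser_vertices (2*s+2) 2 s) p =
    (\<lambda>q. {p, q}) ` {cyc_shift (2*s+2) s p, cyc_shift (2*s+2) (s+1) p, cyc_shift (2*s+2) (s+2) p}"
proof -
  have "\<exists>k\<in>{s, s+1, s+2}. q = cyc_shift (2*s+2) k p"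
    if "{p, q} \<in> stable_kneser_vertices (2*s+2) 2 s" for q
  proof
    have "q \<in> {1..2*s+2}" "s \<le> ndist p q" "ndist p q \<le> s + 2"
      using that s by (auto simp: doubleton_in_stable_kneser_iff)
    then show "(if p \<le> q then q - p else 2*s+2 - (p - q)) \<in> {s, s+1, s+2}"
      by (auto simp: ndist_def split: if_splits)
    show "q = cyc_shift (2*s+2) (if p \<le> q then q - p else 2*s+2 - (p - q)) p"
      using eq_cyc_shift p \<open>q \<in> {1..2*s+2}\<close> by blast
  qed
  moreover have "{p, cyc_shift (2*s+2) k p} \<in> stable_kneser_vertices (2*s+2) 2 s" if "k \<in> {s, s+1, s+2}" for k
    using cyc_shift_in_stable_kneser s p that by simp
  moreover have "x \<in> stable_kneser_vertices (2*s+2) 2 s \<Longrightarrow> p \<in> x \<Longrightarrow> \<exists>q. x = {p, q}" for x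
    by (auto dest: stable_kneser_vertex_doubleton)
  ultimately show ?thesis
    unfolding star_def by blast
qed

lemma card_stable_kneser_star:
  assumes "s > 0" "p \<in> {1..2*s+2}"
  shows "card (star (stable_kneser_vertices (2*s+2) 2 s) p) = 3"
proof -
  have inj: "inj_on (\<lambda>q. {p, q}) A" for A :: "nat set"
    by (auto simp: inj_on_def doubleton_eq_iff)
  show ?thesis
    unfolding stable_kneser_star_eq[OF assms] card_image[OF inj]
    using assms by (auto simp: cyc_shift_def card_insert_if)
qed

lemma ndist_no_triangle:
  assumes "s \<ge> 3"
    and "s \<le> ndist a b" "ndist a b \<le> s + 2"
    and "s \<le> ndist b c" "ndist b c \<le> s + 2"
    and "s \<le> ndist a c" "ndist a c \<le> s + 2"
  shows False
  using assms by (auto simp: ndist_def split: if_splits)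

lemma stable_kneser_intersecting_family_star:
  assumes s: "s \<ge> 3" and F: "F \<subseteq> stable_kneser_vertices (2*s+2) 2 s" "F \<noteq> {}"
    and intersecting: "\<forall>x\<in>F. \<forall>y\<in>F. x \<inter> y \<noteq> {}"
  shows "\<exists>p\<in>{1..2*s+2}. F \<subseteq> star (stable_kneser_vertices (2*s+2) 2 s) p"
proof -
  have "\<exists>p. \<forall>x\<in>F. p \<in> x"
  proof (rule ccontr)
    assume none: "\<nexists>p. \<forall>x\<in>F. p \<in> x"
    obtain a b where ab: "{a, b} \<in> F"
      using F stable_kneser_vertex_doubleton by blast
    from none obtain y where y: "y \<in> F" "a \<notin> y"
      by auto
    from intersecting ab y have "b \<in> y"
      by auto
    obtain c d where "y = {c, d}"
      using y(1) F(1) stable_kneser_vertex_doubleton by blast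
    with \<open>b \<in> y\<close> obtain e where "y = {b, e}"
      by (metis insert_commute insertE singletonD)
    with y have be: "{b, e} \<in> F" "a \<noteq> e"
      by auto
    from none obtain z where z: "z \<in> F" "b \<notin> z"
      by auto
    from intersecting ab be z have "a \<in> z" "e \<in> z"
      by auto
    obtain g h where "z = {g, h}"
      using z(1) F(1) stable_kneser_vertex_doubleton by blast
    with \<open>a \<in> z\<close> \<open>e \<in> z\<close> \<open>a \<noteq> e\<close> have "z = {a, e}"
      by auto
    with ab be z(1) F(1) have "{a, b} \<in> stable_kneser_vertices (2*s+2) 2 s"
      "{b, e} \<in> stable_kneser_vertices (2*s+2) 2 s" "{a, e} \<in> stable_kneser_vertices (2*s+2) 2 s"
      by auto
    then have "s \<le> ndist a b" "ndist a b \<le> s + 2" "s \<le> ndist b e" "ndist b e \<le> s + 2"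
      "s \<le> ndist a e" "ndist a e \<le> s + 2"
      using s by (simp_all add: doubleton_in_stable_kneser_iff)
    then show False
      by (rule ndist_no_triangle[OF s])
  qed
  then obtain p where p: "\<forall>x\<in>F. p \<in> x"
    by blast
  from F obtain x where x: "x \<in> F"
    by blast
  with F(1) have "x \<subseteq> {1..2*s+2}"
    using stable_kneser_vertex_subset[of x] by auto
  with p x have "p \<in> {1..2*s+2}"
    by blast
  with p F show ?thesis
    by (auto simp: star_def)
qed

lemma stable_kneser_edge_weights_const:
  fixes m :: "nat \<Rightarrow> nat"
  assumes s: "s > 0"
    and m: "\<And>a b. {a, b} \<in> stable_kneser_vertices (2*s+2) 2 s \<Longrightarrow> m a + m b = 2"
    and p: "p \<in> {1..2*s+2}"
  shows "m p = 1"
proof -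
  have shift_edge: "m (cyc_shift (2*s+2) k q) + m q = 2"
    if "q \<in> {1..2*s+2}" "k \<in> {s, s+1, s+2}" for q k
    using m cyc_shift_in_stable_kneser[of s q k] that s by (simp add: insert_commute)
  have step: "m (Suc j) = m j" if "1 \<le> j" "j < 2*s+2" for j
  proof -
    \<comment> \<open>\<open>j\<close> and \<open>j + 1\<close> have the common neighbour \<open>j - (s + 2)\<close> on the cycle\<close>
    define i where "i = cyc_shift (2*s+2) (s+2) j"
    have "i \<in> {1..2*s+2}" "cyc_shift (2*s+2) s i = j" "cyc_shift (2*s+2) (s+1) i = Suc j"
      using that s by (auto simp: i_def cyc_shift_def)
    then show ?thesis
      using shift_edge[of i s] shift_edge[of i "s+1"] by auto
  qed
  have const: "m j = m 1" if "1 \<le> j" "j \<le> 2*s+2" for j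
    using that(1) by (induction j rule: dec_induct) (use step that(2) in auto)
  have "cyc_shift (2*s+2) s 1 = s + 1"
    using s by (simp add: cyc_shift_def)
  then have "m (s + 1) + m 1 = 2"
    using shift_edge[of 1 s] by simp
  with const[of "s + 1"] have "m 1 = 1"
    by simp
  with const[of p] p show ?thesis
    by simp
qed

lemma stable_kneser_point_map_inj:
  assumes s: "s > 0" and \<phi>: "\<phi> ` {1..2*s+2} \<subseteq> {1..2*s+2}"
    and fibres: "\<forall>x\<in>stable_kneser_vertices (2*s+2) 2 s. card {q \<in> {1..2*s+2}. \<phi> q \<in> x} = 2"
  shows "inj_on \<phi> {1..2*s+2}"
proof (rule inj_onI)
  define m where "m p = card {q \<in> {1..2*s+2}. \<phi> q = p}" for p
  have "m a + m b = 2" if ab: "{a, b} \<in> stable_kneser_vertices (2*s+2) 2 s" for a b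
  proof -
    have "a \<noteq> b"
      using stable_kneser_vertex_subset[OF ab] by auto
    have "2 = card {q \<in> {1..2*s+2}. \<phi> q \<in> {a, b}}"
      by (rule fibres[rule_format, OF ab, symmetric])
    also have "{q \<in> {1..2*s+2}. \<phi> q \<in> {a, b}} = {q \<in> {1..2*s+2}. \<phi> q = a} \<union> {q \<in> {1..2*s+2}. \<phi> q = b}"
      by auto
    also have "card \<dots> = m a + m b"
      unfolding m_def using \<open>a \<noteq> b\<close> by (intro card_Un_disjoint) auto
    finally show ?thesis
      by simp
  qed
  then have m_one: "m p = 1" if "p \<in> {1..2*s+2}" for p
    using stable_kneser_edge_weights_const[OF s] that by blast
  fix q1 q2 assume q: "q1 \<in> {1..2*s+2}" "q2 \<in> {1..2*s+2}" "\<phi> q1 = \<phi> q2"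
  then have "card {q1, q2} \<le> m (\<phi> q1)"
    unfolding m_def by (intro card_mono) auto
  moreover have "m (\<phi> q1) = 1"
    using m_one \<phi> q(1) by blast
  ultimately show "q1 = q2"
    by (cases "q1 = q2") auto
qed

theorem mainTheorem4:
  fixes s :: nat
  assumes "s \<ge> 3"
  shows "is_core (stable_kneser_vertices (2 * s + 2) 2 s) kneser_adj"
  unfolding is_core_def
proof (intro allI impI)
  let ?P = "{1..2*s+2}" and ?V = "stable_kneser_vertices (2*s+2) 2 s"
  have s: "s > 0"
    using assms by simp
  fix f assume "graph_hom ?V kneser_adj ?V kneser_adj f"
  then have f: "f ` ?V \<subseteq> ?V" "\<forall>x\<in>?V. \<forall>y\<in>?V. x \<inter> y = {} \<longrightarrow> f x \<inter> f y = {}"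
    unfolding graph_hom_def kneser_adj_def by blast+
  have V: "finite ?V" "\<forall>x\<in>?V. x \<subseteq> ?P \<and> card x = 2"
    using finite_stable_kneser_vertices stable_kneser_vertex_subset by blast+
  have "\<forall>p\<in>?P. card (star ?V p) = 3"
    using card_stable_kneser_star[OF s] by blast
  then obtain \<phi> where \<phi>: "\<forall>q\<in>?P. \<phi> q \<in> ?P \<and> {x \<in> ?V. q \<in> f x} = star ?V (\<phi> q)"
    using disjointness_endo_preimage_star[OF finite_atLeastAtMost V _
        stable_kneser_intersecting_family_star[OF assms] f]
    by blast
  have "inj_on \<phi> ?P"
  proof (rule stable_kneser_point_map_inj[OF s])
    show "\<phi> ` ?P \<subseteq> ?P"
      using \<phi> by blast
    show "\<forall>x\<in>?V. card {q \<in> ?P. \<phi> q \<in> x} = 2"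
      using point_map_vimage_vertex[OF _ f(1) \<phi>] V(2) f(1) by auto
  qed
  then show "graph_aut ?V kneser_adj f"
    by (rule kneser_aut_of_injective_point_map[OF finite_atLeastAtMost V f \<phi>])
qed

end
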